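(* Let $G$ be a graph, let $C=a_{1}a_{2}a_{3}a_{1}$ be a triangle of $G$, and let $M_{1},M_{2}$ be two paths in $G$ each with exactly $2$ vertices (i.e. edges). Suppose $C$, $M_{1}$, $M_{2}$ are pairwise vertex-disjoint and $e(V(C),V(M_{1})\cup V(M_{2}))\geq 9$. Then $G[V(C)\cup V(M_{1})\cup V(M_{2})]$ contains vertex-disjoint subgraphs $C'$ and $D$, where $C'$ is a triangle and $D$ has exactly $4$ vertices and at least $4$ edges.
   Context: All graphs are finite, simple and undirected. For disjoint vertex sets $L,M$, $e(L,M)$ is the number of edges of $G$ with one end in $L$ and the other in $M$. For $U\subseteq V(G)$, $G[U]$ is the subgraph induced by $U$. *)

theory Defs
  imports Main
begin

definition simple_graph :: "'a set \<Rightarrow> ('a \<Rightarrow> 'a \<Rightarrow> bool) \<Rightarrow> bool" where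
  "simple_graph V E \<longleftrightarrow> finite V \<and> (\<forall>x y. E x y \<longrightarrow> x \<in> V \<and> y \<in> V) \<and>
     (\<forall>x y. E x y \<longrightarrow> E y x) \<and> (\<forall>x. \<not> E x x)"

definition e_between :: "('a \<Rightarrow> 'a \<Rightarrow> bool) \<Rightarrow> 'a set \<Rightarrow> 'a set \<Rightarrow> nat" where
  "e_between E L M = card {(x, y). x \<in> L \<and> y \<in> M \<and> E x y}"

definition induced_edges :: "('a \<Rightarrow> 'a \<Rightarrow> bool) \<Rightarrow> 'a set \<Rightarrow> 'a set set" where
  "induced_edges E U = {{x, y} | x y. x \<in> U \<and> y \<in> U \<and> E x y}"

end

theory Submission
  imports Defs
begin

text \<open>Nine edges between the triangle and the two edges M1, M2 force a vertex a of the
  triangle joined to both ends of one of them, say Mj, while the other two triangle vertices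
  send at least two edges to the other one, Mk. Then a with Mj is the triangle C', and the two
  remaining triangle vertices together with Mk carry two edges of their own plus at least two
  edges between them, giving D.\<close>

definition has_triangle_and_dense_quad :: "('a \<Rightarrow> 'a \<Rightarrow> bool) \<Rightarrow> 'a set \<Rightarrow> bool" where
  "has_triangle_and_dense_quad E W \<longleftrightarrow>
     (\<exists>T D. T \<subseteq> W \<and> D \<subseteq> W \<and> T \<inter> D = {} \<and> card T = 3 \<and> (\<forall>x\<in>T. \<forall>y\<in>T. x \<noteq> y \<longrightarrow> E x y)
        \<and> card D = 4 \<and> card (induced_edges E D) \<ge> 4)"

lemma finite_induced_edges: "finite U \<Longrightarrow> finite (induced_edges E U)"
  by (rule finite_subset[of _ "Pow U"]) (auto simp: induced_edges_def)

lemma doubleton_in_induced_edges: "x \<in> U \<Longrightarrow> y \<in> U \<Longrightarrow> E x y \<Longrightarrow> {x, y} \<in> induced_edges E U"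
  unfolding induced_edges_def by blast

lemma card_induced_edges_edge: "E x y \<Longrightarrow> 1 \<le> card (induced_edges E {x, y})"
  using finite_induced_edges[of "{x, y}" E] doubleton_in_induced_edges[of x "{x, y}" y E]
  by (auto simp: Suc_le_eq card_gt_0_iff)

lemma card_induced_edges_Un:
  assumes "finite L" "finite M" "L \<inter> M = {}"
  shows "card (induced_edges E L) + card (induced_edges E M) + e_between E L M
           \<le> card (induced_edges E (L \<union> M))"
proof -
  let ?P = "{(x, y). x \<in> L \<and> y \<in> M \<and> E x y}"
  let ?X = "(\<lambda>(x, y). {x, y}) ` ?P"
  have "inj_on (\<lambda>(x, y). {x, y}) ?P"
    using assms(3) by (auto simp: inj_on_def doubleton_eq_iff)
  then have card_X: "card ?X = e_between E L M"
    by (simp add: card_image e_between_def)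
  have disj: "induced_edges E L \<inter> induced_edges E M = {}"
    "(induced_edges E L \<union> induced_edges E M) \<inter> ?X = {}"
    using assms(3) by (auto simp: induced_edges_def doubleton_eq_iff)
  have fin: "finite (induced_edges E L)" "finite (induced_edges E M)" "finite ?X"
    using assms(1,2) finite_induced_edges
    by (auto intro: finite_subset[of ?P "L \<times> M"])
  have "induced_edges E L \<union> induced_edges E M \<union> ?X \<subseteq> induced_edges E (L \<union> M)"
    by (auto simp: induced_edges_def)
  then have "card (induced_edges E L \<union> induced_edges E M \<union> ?X) \<le> card (induced_edges E (L \<union> M))"
    using assms(1,2) by (intro card_mono finite_induced_edges) auto
  then show ?thesis
    using disj fin card_X by (simp add: card_Un_disjoint)
qed

lemma e_between_le_card_mult:
  assumes "finite A" "finite B"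
  shows "e_between E A B \<le> card A * card B"
proof -
  have "e_between E A B \<le> card (A \<times> B)"
    unfolding e_between_def using assms by (intro card_mono) auto
  then show ?thesis by (simp add: card_cartesian_product)
qed

lemma e_between_Un_left:
  assumes "finite A" "finite A'" "finite B" "A \<inter> A' = {}"
  shows "e_between E (A \<union> A') B = e_between E A B + e_between E A' B"
proof -
  have "{(x, y). x \<in> A \<union> A' \<and> y \<in> B \<and> E x y}
        = {(x, y). x \<in> A \<and> y \<in> B \<and> E x y} \<union> {(x, y). x \<in> A' \<and> y \<in> B \<and> E x y}"
    (is "_ = ?P \<union> ?Q") by auto
  moreover have "finite ?P" "finite ?Q"
    using assms(1-3) by (auto intro: finite_subset[of _ "(A \<union> A') \<times> B"])
  moreover have "?P \<inter> ?Q = {}" using assms(4) by auto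
  ultimately show ?thesis
    unfolding e_between_def by (simp add: card_Un_disjoint)
qed

lemma e_between_insert_left:
  "finite A \<Longrightarrow> finite B \<Longrightarrow> x \<notin> A
     \<Longrightarrow> e_between E (insert x A) B = e_between E {x} B + e_between E A B"
  using e_between_Un_left[of "{x}" A B E] by simp

lemma e_between_pair_left:
  "finite B \<Longrightarrow> x \<noteq> y \<Longrightarrow> e_between E {x, y} B = e_between E {x} B + e_between E {y} B"
  using e_between_insert_left[of "{y}" B x E] by simp

lemma e_between_Un_right:
  assumes "finite A" "finite B" "finite B'" "B \<inter> B' = {}"
  shows "e_between E A (B \<union> B') = e_between E A B + e_between E A B'"
proof -
  have "{(x, y). x \<in> A \<and> y \<in> B \<union> B' \<and> E x y}
        = {(x, y). x \<in> A \<and> y \<in> B \<and> E x y} \<union> {(x, y). x \<in> A \<and> y \<in> B' \<and> E x y}"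
    (is "_ = ?P \<union> ?Q") by auto
  moreover have "finite ?P" "finite ?Q"
    using assms(1-3) by (auto intro: finite_subset[of _ "A \<times> (B \<union> B')"])
  moreover have "?P \<inter> ?Q = {}" using assms(4) by auto
  ultimately show ?thesis
    unfolding e_between_def by (simp add: card_Un_disjoint)
qed

lemma e_between_singletons: "e_between E {x} {y} = of_bool (E x y)"
proof -
  have "{(x', y'). x' \<in> {x} \<and> y' \<in> {y} \<and> E x' y'} = (if E x y then {(x, y)} else {})"
    by auto
  then show ?thesis unfolding e_between_def by simp
qed

lemma e_between_vertex_edge_eq_2:
  assumes "e_between E {a} {u, v} = 2"
  shows "E a u" "E a v"
proof -
  have "u \<noteq> v" using assms e_between_singletons[of E a u] by (cases "E a u") auto
  moreover have "{u, v} = {u} \<union> {v}" by auto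
  ultimately have "e_between E {a} {u, v} = of_bool (E a u) + of_bool (E a v)"
    by (simp only:) (subst e_between_Un_right; simp add: e_between_singletons)
  then show "E a u" "E a v" using assms by (cases "E a u"; cases "E a v"; simp)+
qed

lemma has_triangle_and_dense_quadI:
  assumes apex: "e_between E {a} {u, v} = 2"
    and cross: "2 \<le> e_between E {b} {p, q} + e_between E {c} {p, q}"
    and sym: "\<And>x y. E x y \<Longrightarrow> E y x"
    and dist: "distinct [a, b, c, u, v, p, q]"
    and edges: "E b c" "E u v" "E p q"
    and W: "W = {a, b, c, u, v, p, q}"
  shows "has_triangle_and_dense_quad E W"
  unfolding has_triangle_and_dense_quad_def
proof (intro exI conjI)
  show "{a, u, v} \<subseteq> W" "{b, c, p, q} \<subseteq> W" using W by auto
  show "{a, u, v} \<inter> {b, c, p, q} = {}" "card {a, u, v} = 3" "card {b, c, p, q} = 4"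
    using dist by auto
  show "\<forall>x\<in>{a, u, v}. \<forall>y\<in>{a, u, v}. x \<noteq> y \<longrightarrow> E x y"
    using e_between_vertex_edge_eq_2[OF apex] edges(2) sym by auto
  have quad: "{b, c, p, q} = {b, c} \<union> {p, q}" by auto
  have "card (induced_edges E {b, c}) + card (induced_edges E {p, q}) + e_between E {b, c} {p, q}
          \<le> card (induced_edges E {b, c, p, q})"
    unfolding quad using dist by (intro card_induced_edges_Un) auto
  then show "4 \<le> card (induced_edges E {b, c, p, q})"
    using card_induced_edges_edge[of E, OF edges(1)] card_induced_edges_edge[of E, OF edges(3)]
      cross e_between_pair_left[of "{p, q}" b c E] dist
    by simp
qed

lemma nine_of_six_pairs:
  fixes r1 r2 r3 q1 q2 q3 :: nat
  assumes "r1 \<le> 2" "r2 \<le> 2" "r3 \<le> 2" "q1 \<le> 2" "q2 \<le> 2" "q3 \<le> 2"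
    and "9 \<le> r1 + r2 + r3 + q1 + q2 + q3"
  shows "(r1 = 2 \<and> 2 \<le> q2 + q3) \<or> (r2 = 2 \<and> 2 \<le> q1 + q3) \<or> (r3 = 2 \<and> 2 \<le> q1 + q2)
       \<or> (q1 = 2 \<and> 2 \<le> r2 + r3) \<or> (q2 = 2 \<and> 2 \<le> r1 + r3) \<or> (q3 = 2 \<and> 2 \<le> r1 + r2)"
  using assms by arith

theorem lemma5:
  fixes V :: "'a set" and E :: "'a \<Rightarrow> 'a \<Rightarrow> bool"
    and a1 a2 a3 u1 v1 u2 v2 :: 'a
  assumes G: "simple_graph V E"
    and C: "E a1 a2" "E a2 a3" "E a3 a1"
    and M1: "E u1 v1" and M2: "E u2 v2"
    and disj: "card {a1, a2, a3, u1, v1, u2, v2} = 7"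
    and nine: "e_between E {a1, a2, a3} {u1, v1, u2, v2} \<ge> 9"
  shows "\<exists>T D. T \<subseteq> {a1, a2, a3, u1, v1, u2, v2} \<and> D \<subseteq> {a1, a2, a3, u1, v1, u2, v2}
     \<and> T \<inter> D = {} \<and> card T = 3 \<and> (\<forall>x\<in>T. \<forall>y\<in>T. x \<noteq> y \<longrightarrow> E x y)
     \<and> card D = 4 \<and> card (induced_edges E D) \<ge> 4"
proof -
  have sym: "\<And>x y. E x y \<Longrightarrow> E y x" using G unfolding simple_graph_def by blast
  have dist: "distinct [a1, a2, a3, u1, v1, u2, v2]"
    using disj by (intro card_distinct) simp
  let ?r = "\<lambda>a. e_between E {a} {u1, v1}" and ?q = "\<lambda>a. e_between E {a} {u2, v2}"
  have "card {u1, v1} = 2" "card {u2, v2} = 2" using dist by auto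
  then have bound: "?r a \<le> 2" "?q a \<le> 2" for a
    using e_between_le_card_mult[of "{a}" "{u1, v1}" E] e_between_le_card_mult[of "{a}" "{u2, v2}" E]
    by simp_all
  have M: "{u1, v1, u2, v2} = {u1, v1} \<union> {u2, v2}" by auto
  have "e_between E {a} {u1, v1, u2, v2} = ?r a + ?q a" for a
    unfolding M using dist by (intro e_between_Un_right) auto
  moreover have "e_between E {a1, a2, a3} B = e_between E {a1} B + e_between E {a2} B + e_between E {a3} B"
    if "finite B" for B
    using e_between_insert_left[of "{a2, a3}" B a1 E] e_between_pair_left[of B a2 a3 E] dist that
    by simp
  ultimately have "e_between E {a1, a2, a3} {u1, v1, u2, v2}
          = ?r a1 + ?r a2 + ?r a3 + ?q a1 + ?q a2 + ?q a3"
    by simp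
  then have sum9: "9 \<le> ?r a1 + ?r a2 + ?r a3 + ?q a1 + ?q a2 + ?q a3" using nine by simp
  \<comment> \<open>In each of the six cases, matching the two case hypotheses against apex and cross
    fixes the labelling a, b, c, u, v, p, q.\<close>
  have "has_triangle_and_dense_quad E {a1, a2, a3, u1, v1, u2, v2}"
    by (insert nine_of_six_pairs[OF bound(1) bound(1) bound(1) bound(2) bound(2) bound(2) sum9],
        elim disjE conjE; rule has_triangle_and_dense_quadI, assumption, assumption)
      (use sym dist C M1 M2 in auto)
  then show ?thesis unfolding has_triangle_and_dense_quad_def .
qed

end
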